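(* Let $L$ be a finite simplicial complex of dimension $k$ with totally ordered vertices, let $M\in Z_k(L;\mathbb{Z}/2)$ be a $k$-cycle and $\Delta$ a $k$-simplex of $M$. Then the reduction mod 2 of the cochain $\mu$ (defined below) evaluates to $1\in\mathbb{Z}/2$ on the chain $O\Delta\times M\in C_{2k}(OL\times L;\mathbb{Z}/2)$, the sum of all cells $\sigma\times b$ with $\sigma$ a $k$-simplex of $OL$ satisfying $p(\sigma)=\Delta$ and $b$ a $k$-simplex of $M$.
   Context: For $L$ with vertex set $V=\{v_0<\dots<v_n\}$, $OL$ is the simplicial complex with vertex set $V\times\{\pm1\}$ (write $v^\pm=(v,\pm1)$) in which $\{(v_0,\varepsilon_0),\dots,(v_j,\varepsilon_j)\}$ spans a simplex iff the $v_i$ are distinct and $\{v_0,\dots,v_j\}$ is a simplex of $L$; $p:OL\to L$, $v^\pm\mapsto v$. Vertices of $OL$ are ordered $v_0^-<v_0^+<v_1^-<v_1^+<\dots<v_n^-<v_n^+$. The cochain $\mu\in C^{2k}(OL\times L;\mathbb{Z})$: for a $k$-simplex $\sigma=[x_0,\dots,x_k]$ of $OL$ and a $k$-simplex $b=[w_0,\dots,w_k]$ of $L$ (vertices in increasing order), regarding each $w_i$ as $w_i^-$, $\mu(\sigma,b)=1$ if $x_0\le w_0^-<x_1\le w_1^-<\dots<x_k\le w_k^-$ and $0$ otherwise. *)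

theory Defs
  imports Main "HOL-Library.Product_Lexorder"
begin

text \<open>Vertices of OL are pairs (v, s) with s = False meaning v^- and s = True meaning v^+;
the lexicographic order on 'a \<times> bool (False < True) is exactly
v0^- < v0^+ < v1^- < v1^+ < ...\<close>

definition simplicial_complex :: "'a set set \<Rightarrow> bool" where
  "simplicial_complex L \<longleftrightarrow>
     (\<forall>s\<in>L. finite s \<and> s \<noteq> {} \<and> (\<forall>t. t \<subseteq> s \<and> t \<noteq> {} \<longrightarrow> t \<in> L))"

definition complex_dim :: "'a set set \<Rightarrow> nat \<Rightarrow> bool" where
  "complex_dim L k \<longleftrightarrow> (\<forall>s\<in>L. card s \<le> k + 1) \<and> (\<exists>s\<in>L. card s = k + 1)"

definition OL :: "'a set set \<Rightarrow> ('a \<times> bool) set set" where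
  "OL L = {\<sigma>. finite \<sigma> \<and> \<sigma> \<noteq> {} \<and> inj_on fst \<sigma> \<and> fst ` \<sigma> \<in> L}"

text \<open>k-chains with Z/2 coefficients are sets of k-simplices; a k-cycle has zero boundary:
every (k-1)-simplex of L is a face of an even number of simplices of the chain.\<close>
definition cycle2 :: "'a set set \<Rightarrow> nat \<Rightarrow> 'a set set \<Rightarrow> bool" where
  "cycle2 L k M \<longleftrightarrow> M \<subseteq> {s\<in>L. card s = k + 1} \<and>
     (\<forall>\<tau>\<in>L. card \<tau> = k \<longrightarrow> even (card {b\<in>M. \<tau> \<subseteq> b}))"

definition mu :: "nat \<Rightarrow> ('a::linorder \<times> bool) set \<Rightarrow> 'a set \<Rightarrow> int" where
  "mu k \<sigma> b =
    (let xs = sorted_list_of_set \<sigma>; ws = map (\<lambda>w. (w, False)) (sorted_list_of_set b) in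
     if length xs = k + 1 \<and> length ws = k + 1 \<and>
        (\<forall>i\<le>k. xs ! i \<le> ws ! i) \<and> (\<forall>i<k. ws ! i < xs ! (i + 1))
     then 1 else 0)"

end

theory Submission
  imports Defs
begin

text \<open>
  Exchanging the two sums, the value of mu on O\<Delta> \<times> M is the sum over the
  simplices b of M of the number of lifts \<sigma> of \<Delta> (sets of signed vertices projecting
  bijectively onto \<Delta>) with mu(\<sigma>, b) = 1. For b = \<Delta> exactly one lift qualifies,
  namely the all-minus lift \<Delta> \<times> {-}. For b \<noteq> \<Delta> the count is even: let i be the
  first position where the increasing vertex lists d of \<Delta> and w of b differ. If
  w_i < d_i, the condition x_i \<le> w_i^- fails for every lift. If d_i < w_i, toggling
  the sign of the vertex d_i is a fixed-point-free involution on the lifts that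
  preserves mu(-, b), because d_i^\<plusminus> lies strictly between w_(i-1)^- and w_i^-.
  Hence the total is odd. Note that only the facts that M is a finite set of
  k-simplices containing \<Delta> are needed, not the cycle condition.
\<close>

lemma sorted_list_of_set_image_strict_mono:
  fixes f :: "'a::linorder \<Rightarrow> 'b::linorder"
  assumes "finite A" and "\<And>x y. x \<in> A \<Longrightarrow> y \<in> A \<Longrightarrow> x < y \<Longrightarrow> f x < f y"
  shows "sorted_list_of_set (f ` A) = map f (sorted_list_of_set A)"
proof (rule strict_sorted_equal)
  show "sorted_wrt (<) (sorted_list_of_set (f ` A))" using assms by simp
  have "sorted_wrt (<) (sorted_list_of_set A)" using assms by simp
  then show "sorted_wrt (<) (map f (sorted_list_of_set A))"
    unfolding sorted_wrt_map
    by (rule sorted_wrt_mono_rel[rotated]) (use assms in auto)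
  show "set (sorted_list_of_set (f ` A)) = set (map f (sorted_list_of_set A))"
    using assms by simp
qed

lemma first_difference:
  assumes "length xs = length ys" and "xs \<noteq> ys"
  obtains i where "i < length xs" and "xs ! i \<noteq> ys ! i"
    and "\<And>j. j < i \<Longrightarrow> xs ! j = ys ! j"
proof -
  let ?P = "\<lambda>i. i < length xs \<and> xs ! i \<noteq> ys ! i"
  have "\<exists>i. ?P i" using assms nth_equalityI by metis
  then have "?P (LEAST i. ?P i)" by (rule LeastI_ex)
  moreover have "xs ! j = ys ! j" if "j < (LEAST i. ?P i)" for j
    using not_less_Least[OF that] less_trans[OF that] calculation by auto
  ultimately show ?thesis using that by blast
qed

lemma even_card_involution:
  assumes "finite X" and "\<And>x. x \<in> X \<Longrightarrow> h x \<in> X" and "\<And>x. x \<in> X \<Longrightarrow> h (h x) = x"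
    and "\<And>x. x \<in> X \<Longrightarrow> h x \<noteq> x"
  shows "even (card X)"
  using assms
proof (induction X rule: finite_psubset_induct)
  case (psubset X)
  show ?case
  proof (cases "X = {}")
    case False
    then obtain x where x: "x \<in> X" by blast
    let ?Y = "X - {x, h x}"
    have "even (card ?Y)"
    proof (rule psubset.IH)
      show "?Y \<subset> X" using x by blast
      fix y assume "y \<in> ?Y"
      then have y: "y \<in> X" "y \<noteq> x" "y \<noteq> h x" by auto
      show "h (h y) = y" "h y \<noteq> y" using psubset.prems(2,3) y(1) by auto
      have "h y \<noteq> h x" and "h y \<noteq> x" using psubset.prems(2) x y by metis+
      then show "h y \<in> ?Y" using psubset.prems(1) y(1) by blast
    qed
    moreover have "card X = card ?Y + 2"
    proof -
      have "h x \<noteq> x" using psubset.prems(3) x .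
      then have pair: "{x, h x} \<subseteq> X" "card {x, h x} = 2" using psubset.prems(1) x by auto
      then have "card {x, h x} \<le> card X" using psubset.hyps by (metis card_mono)
      then show ?thesis using pair psubset.hyps by (simp add: card_Diff_subset)
    qed
    ultimately show ?thesis by simp
  qed simp
qed

text \<open>For a simplex \<Delta> of L these are the simplices of O\<Delta>
  over \<Delta>, i.e. the cells \<sigma> of OL with p(\<sigma>) = \<Delta>.\<close>
definition lifts :: "'a set \<Rightarrow> ('a \<times> bool) set set" where
  "lifts \<Delta> = {\<sigma>. finite \<sigma> \<and> inj_on fst \<sigma> \<and> fst ` \<sigma> = \<Delta>}"

lemma finite_lifts: "finite \<Delta> \<Longrightarrow> finite (lifts \<Delta>)"
proof -
  assume "finite \<Delta>"
  have "lifts \<Delta> \<subseteq> Pow (\<Delta> \<times> UNIV)" by (force simp: lifts_def)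
  then show ?thesis using \<open>finite \<Delta>\<close> by (simp add: finite_subset)
qed

lemma card_lift: "\<sigma> \<in> lifts \<Delta> \<Longrightarrow> card \<sigma> = card \<Delta>"
  unfolding lifts_def by (auto simp: card_image)

lemma lift_fst_less:
  fixes \<sigma> :: "('a::linorder \<times> bool) set"
  assumes "\<sigma> \<in> lifts \<Delta>" and "x \<in> \<sigma>" and "y \<in> \<sigma>" and "x < y"
  shows "fst x < fst y"
proof -
  have "fst x \<le> fst y" "fst x \<noteq> fst y"
    using assms by (auto simp: less_prod_def' inj_on_def lifts_def)
  then show ?thesis by simp
qed

lemma nth_sorted_lift:
  fixes \<sigma> :: "('a::linorder \<times> bool) set"
  assumes "\<sigma> \<in> lifts \<Delta>" and "j < card \<Delta>"
  shows "fst (sorted_list_of_set \<sigma> ! j) = sorted_list_of_set \<Delta> ! j"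
proof -
  have "sorted_list_of_set \<Delta> = map fst (sorted_list_of_set \<sigma>)"
    using assms(1) sorted_list_of_set_image_strict_mono[of \<sigma> fst] lift_fst_less[OF assms(1)]
    by (auto simp: lifts_def)
  moreover have "length (sorted_list_of_set \<sigma>) = card \<Delta>"
    using assms(1) card_lift[OF assms(1)] by (simp add: lifts_def)
  ultimately show ?thesis using assms(2) by simp
qed

lemma mu_0_or_1: "mu k \<sigma> b = 0 \<or> mu k \<sigma> b = 1"
  unfolding mu_def Let_def by simp

lemma mu_eq_1_iff:
  fixes \<sigma> :: "('a::linorder \<times> bool) set"
  assumes "card \<sigma> = k + 1" and "card b = k + 1"
  shows "mu k \<sigma> b = 1 \<longleftrightarrow>
    (\<forall>i\<le>k. sorted_list_of_set \<sigma> ! i \<le> (sorted_list_of_set b ! i, False)) \<and>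
    (\<forall>i<k. (sorted_list_of_set b ! i, False) < sorted_list_of_set \<sigma> ! (i + 1))"
  using assms by (auto simp: mu_def Let_def nth_map)

text \<open>The case b = \<Delta>: the all-minus lift is the only lift on which mu(-, \<Delta>) = 1,
  since x_j \<le> d_j^- with x_j over d_j forces x_j = d_j^-.\<close>
lemma lifts_mu_self:
  fixes \<Delta> :: "'a::linorder set"
  assumes cD: "card \<Delta> = k + 1"
  shows "{\<sigma> \<in> lifts \<Delta>. mu k \<sigma> \<Delta> = 1} = {\<Delta> \<times> {False}}"
proof -
  have fin: "finite \<Delta>" using cD card.infinite by fastforce
  let ?D = "sorted_list_of_set \<Delta>"
  have lD: "length ?D = k + 1" using cD by simp
  have minus_lift: "\<Delta> \<times> {False} \<in> lifts \<Delta>"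
    using fin by (auto simp: lifts_def inj_on_def image_iff)
  have "sorted_list_of_set ((\<lambda>w. (w, False)) ` \<Delta>) = map (\<lambda>w. (w, False)) ?D"
    by (rule sorted_list_of_set_image_strict_mono[OF fin]) simp
  moreover have "\<Delta> \<times> {False} = (\<lambda>w. (w, False)) ` \<Delta>" by auto
  ultimately have sorted_minus: "sorted_list_of_set (\<Delta> \<times> {False}) = map (\<lambda>w. (w, False)) ?D"
    by simp
  have "?D ! i < ?D ! (i + 1)" if "i < k" for i
    using sorted_wrt_nth_less[of "(<)" ?D i "i + 1"] that lD by simp
  then have mu_minus: "mu k (\<Delta> \<times> {False}) \<Delta> = 1"
    using mu_eq_1_iff[OF card_lift[OF minus_lift, unfolded cD] cD] lD
    unfolding sorted_minus by simp
  have unique: "\<sigma> = \<Delta> \<times> {False}" if \<sigma>: "\<sigma> \<in> lifts \<Delta>" "mu k \<sigma> \<Delta> = 1" for \<sigma>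
  proof -
    let ?xs = "sorted_list_of_set \<sigma>"
    have fs: "finite \<sigma>" and img: "fst ` \<sigma> = \<Delta>" using \<sigma>(1) by (simp_all add: lifts_def)
    have below: "\<forall>i\<le>k. ?xs ! i \<le> (?D ! i, False)"
      using \<sigma>(2) mu_eq_1_iff[OF card_lift[OF \<sigma>(1), unfolded cD] cD] by simp
    have minus: "snd x = False" if "x \<in> \<sigma>" for x
    proof -
      have "x \<in> set ?xs" using \<open>x \<in> \<sigma>\<close> fs by simp
      then obtain j where j: "j < length ?xs" "x = ?xs ! j" by (metis in_set_conv_nth)
      have "j \<le> k" using j card_lift[OF \<sigma>(1)] cD fs by simp
      then have "fst x = ?D ! j" "x \<le> (?D ! j, False)"
        using nth_sorted_lift[OF \<sigma>(1), of j] cD j below by auto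
      then show ?thesis by (cases x) auto
    qed
    show ?thesis
    proof
      show "\<sigma> \<subseteq> \<Delta> \<times> {False}" using img minus by force
      show "\<Delta> \<times> {False} \<subseteq> \<sigma>"
      proof
        fix y assume "y \<in> \<Delta> \<times> {False}"
        then obtain x where "x \<in> \<sigma>" "fst x = fst y" "snd y = False" using img by force
        with minus show "y \<in> \<sigma>" using prod_eqI[of x y] by simp
      qed
    qed
  qed
  show ?thesis using minus_lift mu_minus unique by blast
qed

definition flip_sign :: "'a \<Rightarrow> 'a \<times> bool \<Rightarrow> 'a \<times> bool" where
  "flip_sign c x = (if fst x = c then (c, \<not> snd x) else x)"

lemma flip_sign_flip_sign [simp]: "flip_sign c (flip_sign c x) = x"
  by (auto simp: flip_sign_def)

lemma fst_flip_sign [simp]: "fst (flip_sign c x) = fst x"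
  by (auto simp: flip_sign_def)

lemma flip_sign_lift: "\<sigma> \<in> lifts \<Delta> \<Longrightarrow> flip_sign c ` \<sigma> \<in> lifts \<Delta>"
  unfolding lifts_def by (auto simp: inj_on_def image_image)

lemma sorted_flip_sign_lift:
  fixes \<sigma> :: "('a::linorder \<times> bool) set"
  assumes "\<sigma> \<in> lifts \<Delta>"
  shows "sorted_list_of_set (flip_sign c ` \<sigma>) = map (flip_sign c) (sorted_list_of_set \<sigma>)"
proof (rule sorted_list_of_set_image_strict_mono)
  show "finite \<sigma>" using assms by (simp add: lifts_def)
  fix x y assume "x \<in> \<sigma>" "y \<in> \<sigma>" "x < y"
  then have "fst (flip_sign c x) < fst (flip_sign c y)" using lift_fst_less[OF assms] by simp
  then show "flip_sign c x < flip_sign c y" by (simp add: less_prod_def')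
qed

lemma flip_sign_lift_neq:
  assumes "\<sigma> \<in> lifts \<Delta>" and "c \<in> \<Delta>"
  shows "flip_sign c ` \<sigma> \<noteq> \<sigma>"
proof
  assume fixed: "flip_sign c ` \<sigma> = \<sigma>"
  obtain x where x: "x \<in> \<sigma>" "fst x = c" using assms by (auto simp: lifts_def)
  then have "flip_sign c x \<in> \<sigma>" using fixed by blast
  moreover have "flip_sign c x \<noteq> x" "fst (flip_sign c x) = fst x"
    using x(2) by (auto simp: flip_sign_def prod_eq_iff)
  ultimately show False using x(1) assms(1) by (auto simp: lifts_def inj_on_def)
qed

text \<open>The case b \<noteq> \<Delta>, first difference at i with w_i < d_i: no lift satisfies
  x_i \<le> w_i^-, as x_i lies over d_i.\<close>
lemma mu_lift_overtaken:
  fixes \<Delta> b :: "'a::linorder set"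
  assumes \<sigma>: "\<sigma> \<in> lifts \<Delta>" and cD: "card \<Delta> = k + 1" and cb: "card b = k + 1"
    and i: "i \<le> k" "sorted_list_of_set b ! i < sorted_list_of_set \<Delta> ! i"
  shows "mu k \<sigma> b \<noteq> 1"
proof
  assume "mu k \<sigma> b = 1"
  then have "sorted_list_of_set \<sigma> ! i \<le> (sorted_list_of_set b ! i, False)"
    using mu_eq_1_iff[OF card_lift[OF \<sigma>, unfolded cD] cb] i(1) by simp
  moreover have "fst (sorted_list_of_set \<sigma> ! i) = sorted_list_of_set \<Delta> ! i"
    using nth_sorted_lift[OF \<sigma>] i(1) cD by simp
  ultimately show False using i(2) by (cases "sorted_list_of_set \<sigma> ! i") auto
qed

text \<open>The case b \<noteq> \<Delta>, first difference at i with d_i < w_i: toggling the sign of d_i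
  only changes the i-th signed vertex, and both signs of d_i lie strictly between
  w_(i-1)^- = d_(i-1)^- and w_i^-, so mu(-, b) is unchanged.\<close>
lemma mu_flip_sign_lift:
  fixes \<Delta> b :: "'a::linorder set"
  defines "D \<equiv> sorted_list_of_set \<Delta>" and "W \<equiv> sorted_list_of_set b"
  assumes \<sigma>: "\<sigma> \<in> lifts \<Delta>" and cD: "card \<Delta> = k + 1" and cb: "card b = k + 1"
    and i: "i \<le> k" "D ! i < W ! i" and agree: "\<And>j. j < i \<Longrightarrow> D ! j = W ! j"
  shows "mu k (flip_sign (D ! i) ` \<sigma>) b = mu k \<sigma> b"
proof -
  let ?c = "D ! i"
  let ?xs = "sorted_list_of_set \<sigma>"
  have over: "fst (?xs ! j) = D ! j" if "j \<le> k" for j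
    using nth_sorted_lift[OF \<sigma>, of j] that cD by (simp add: D_def)
  have "length ?xs = k + 1" using card_lift[OF \<sigma>] cD \<sigma> by (simp add: lifts_def)
  moreover have "D ! j = ?c \<longleftrightarrow> j = i" if "j \<le> k" for j
    using nth_eq_iff_index_eq[of D j i] that i(1) cD by (simp add: D_def)
  ultimately have flipped: "map (flip_sign ?c) ?xs ! j = (if j = i then (?c, \<not> snd (?xs ! j)) else ?xs ! j)"
    if "j \<le> k" for j
    using over[OF that] that by (auto simp: flip_sign_def)
  have W_before: "W ! (i - 1) < ?c" if "0 < i"
  proof -
    have "W ! (i - 1) = D ! (i - 1)" using agree that by simp
    also have "\<dots> < ?c"
      using sorted_wrt_nth_less[of "(<)" D "i - 1" i] that i(1) cD by (simp add: D_def)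
    finally show ?thesis .
  qed
  have upper: "(map (flip_sign ?c) ?xs ! j \<le> (W ! j, False)) = (?xs ! j \<le> (W ! j, False))"
    if "j \<le> k" for j
    using flipped[OF that] over[OF that] i(2) by (cases "?xs ! j") auto
  have lower: "((W ! j, False) < map (flip_sign ?c) ?xs ! (j + 1)) = ((W ! j, False) < ?xs ! (j + 1))"
    if "j < k" for j
  proof (cases "j + 1 = i")
    case True
    then have "W ! j < ?c" using W_before by fastforce
    then show ?thesis using flipped[of "j + 1"] over[of "j + 1"] that True
      by (cases "?xs ! (j + 1)") auto
  qed (use flipped[of "j + 1"] that in auto)
  have "mu k (flip_sign ?c ` \<sigma>) b = 1 \<longleftrightarrow> mu k \<sigma> b = 1"
    using mu_eq_1_iff[OF card_lift[OF flip_sign_lift[OF \<sigma>], unfolded cD] cb]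
      mu_eq_1_iff[OF card_lift[OF \<sigma>, unfolded cD] cb] upper lower
    unfolding sorted_flip_sign_lift[OF \<sigma>] W_def by simp
  then show ?thesis using mu_0_or_1[of k _ b] by metis
qed

lemma even_lifts_mu_other:
  fixes \<Delta> b :: "'a::linorder set"
  assumes cD: "card \<Delta> = k + 1" and cb: "card b = k + 1" and ne: "b \<noteq> \<Delta>"
  shows "even (card {\<sigma> \<in> lifts \<Delta>. mu k \<sigma> b = 1})"
proof -
  let ?D = "sorted_list_of_set \<Delta>" and ?W = "sorted_list_of_set b"
  let ?A = "{\<sigma> \<in> lifts \<Delta>. mu k \<sigma> b = 1}"
  have finD: "finite \<Delta>" and finb: "finite b" using cD cb card.infinite by fastforce+
  have "length ?D = length ?W" using cD cb by simp
  moreover have "?D \<noteq> ?W" using ne finD finb by (metis set_sorted_list_of_set)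
  ultimately obtain i where i: "i < length ?D" "?D ! i \<noteq> ?W ! i"
    and agree: "\<And>j. j < i \<Longrightarrow> ?D ! j = ?W ! j"
    by (rule first_difference) blast+
  have ik: "i \<le> k" using i(1) cD by simp
  consider "?W ! i < ?D ! i" | "?D ! i < ?W ! i" using i(2) by fastforce
  then show ?thesis
  proof cases
    case 1
    then have empty: "?A = {}" using mu_lift_overtaken[OF _ cD cb ik] by blast
    show ?thesis unfolding empty by simp
  next
    case 2
    let ?h = "\<lambda>\<sigma>. flip_sign (?D ! i) ` \<sigma>"
    have c: "?D ! i \<in> \<Delta>" using i(1) finD by (metis nth_mem set_sorted_list_of_set)
    show ?thesis
    proof (rule even_card_involution[of ?A ?h])
      show "finite ?A" using finite_lifts[OF finD] by simp
      fix \<sigma> assume \<sigma>: "\<sigma> \<in> ?A"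
      show "?h \<sigma> \<in> ?A"
        using \<sigma> flip_sign_lift[of \<sigma> \<Delta>] mu_flip_sign_lift[OF _ cD cb ik 2 agree] by simp
      show "?h (?h \<sigma>) = \<sigma>" by (simp add: image_image)
      show "?h \<sigma> \<noteq> \<sigma>" using \<sigma> flip_sign_lift_neq[OF _ c] by simp
    qed
  qed
qed

lemma sum_mu_lifts:
  fixes \<Delta> :: "'a::linorder set"
  assumes "finite \<Delta>"
  shows "(\<Sum>\<sigma>\<in>lifts \<Delta>. mu k \<sigma> b) = int (card {\<sigma> \<in> lifts \<Delta>. mu k \<sigma> b = 1})"
proof -
  have "(\<Sum>\<sigma>\<in>lifts \<Delta>. mu k \<sigma> b) = (\<Sum>\<sigma>\<in>lifts \<Delta>. of_bool (mu k \<sigma> b = 1))"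
    by (rule sum.cong[OF refl]) (use mu_0_or_1[of k _ b] in auto)
  also have "\<dots> = int (card {\<sigma> \<in> lifts \<Delta>. mu k \<sigma> b = 1})"
    using finite_lifts[OF assms] by (simp add: Collect_conj_eq Int_commute)
  finally show ?thesis .
qed

lemma odd_sum_mu_lifts:
  fixes \<Delta> :: "'a::linorder set"
  assumes finM: "finite M" and cM: "\<And>b. b \<in> M \<Longrightarrow> card b = k + 1" and \<Delta>: "\<Delta> \<in> M"
  shows "odd (\<Sum>\<sigma>\<in>lifts \<Delta>. \<Sum>b\<in>M. mu k \<sigma> b)"
proof -
  have cD: "card \<Delta> = k + 1" using cM \<Delta> .
  then have finD: "finite \<Delta>" using card.infinite by fastforce
  let ?count = "\<lambda>b. int (card {\<sigma> \<in> lifts \<Delta>. mu k \<sigma> b = 1})"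
  have "(\<Sum>\<sigma>\<in>lifts \<Delta>. \<Sum>b\<in>M. mu k \<sigma> b) = (\<Sum>b\<in>M. \<Sum>\<sigma>\<in>lifts \<Delta>. mu k \<sigma> b)"
    by (rule sum.swap)
  also have "\<dots> = (\<Sum>b\<in>M. ?count b)"
    using sum_mu_lifts[OF finD] by simp
  also have "\<dots> = ?count \<Delta> + (\<Sum>b\<in>M - {\<Delta>}. ?count b)"
    using finM \<Delta> by (simp add: sum.remove)
  also have "?count \<Delta> = 1" using lifts_mu_self[OF cD] by simp
  finally have split: "(\<Sum>\<sigma>\<in>lifts \<Delta>. \<Sum>b\<in>M. mu k \<sigma> b) = 1 + (\<Sum>b\<in>M - {\<Delta>}. ?count b)" .
  have "even (\<Sum>b\<in>M - {\<Delta>}. ?count b)"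
    using even_lifts_mu_other[OF cD cM] by (intro dvd_sum) auto
  then show ?thesis unfolding split by simp
qed

lemma OL_simplices_over:
  assumes "\<Delta> \<in> L" and "card \<Delta> = k + 1"
  shows "{\<sigma> \<in> OL L. card \<sigma> = k + 1 \<and> fst ` \<sigma> = \<Delta>} = lifts \<Delta>"
proof -
  have "\<Delta> \<noteq> {}" using assms(2) by auto
  then show ?thesis
    using assms by (auto simp: OL_def lifts_def card_image)
qed

theorem lemma4p4:
  fixes L :: "'a::linorder set set" and k :: nat and M :: "'a set set" and \<Delta> :: "'a set"
  assumes "simplicial_complex L" and "finite L" and "complex_dim L k"
    and "cycle2 L k M" and "\<Delta> \<in> M"
  shows "odd (\<Sum>\<sigma>\<in>{\<sigma>\<in>OL L. card \<sigma> = k + 1 \<and> fst ` \<sigma> = \<Delta>}. \<Sum>b\<in>M. mu k \<sigma> b)"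
proof -
  have M_simplices: "M \<subseteq> {s \<in> L. card s = k + 1}"
    using assms(4) by (simp add: cycle2_def)
  then have "finite M" using assms(2) by (auto intro: finite_subset)
  moreover have "\<Delta> \<in> L" "card \<Delta> = k + 1" using M_simplices assms(5) by auto
  ultimately show ?thesis
    using odd_sum_mu_lifts[of M k \<Delta>] M_simplices assms(5) OL_simplices_over[of \<Delta> L k]
    by auto
qed

end
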